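(* Let $Q$ be a reduced quantale with bottom element $0$. Then the m-filter $\mathcal{F}_{\nmid0}$ is conormal over $Q$. Moreover, for $x,y\in Q$, $\overline x=\overline y$ in $Q_{\mathcal{F}_{\nmid0}}$ if and only if $\hbar(x)=\hbar(y)$, where $\hbar:Q\to Q$, $\hbar(q)=\sum\{q'\in Q:qq'=0\}$.
   Context: A quantale is a poset $Q$ with all nonempty joins $\sum$, top $1$, commutative associative multiplication with unit $1$ distributing over nonempty joins. $Q$ with bottom $0$ is reduced if $a^2=0$ implies $a=0$. An m-filter is a subset of $Q$ containing $1$, upward closed and closed under multiplication. For $a\in Q$ the codense filter is $\mathcal{F}_{\nmid a}=\{q\in Q: \text{for all }x\in Q,\ qx\le a\Rightarrow x\le a\}$ (an m-filter). For $a,b\in Q$: $a\preceq^1_\mathcal{F}b$ means there are families $(a_i)$ in $Q$, $(s_i)$ in $\mathcal{F}$ with $a\le\sum a_i$ and $s_ia_i\le b$; $a\preceq^n_\mathcal{F}b$ means a chain of $n$ such steps; $a\preceq_\mathcal{F}b$ means $a\preceq^n_\mathcal{F}b$ for some $n\ge1$. $Q_\mathcal{F}$ is $Q$ modulo $a\sim b\iff a\preceq_\mathcal{F}b\preceq_\mathcal{F}a$, with classes $\overline a$. $\mathcal{C}$ is conormal over $Q$ (as a module over itself) if for all $m,n\in Q$ with $m\preceq^1_\mathcal{C}n$ there is $s\in\mathcal{C}$ with $sm\le n$. *)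

theory Defs
  imports Main
begin

text \<open>A quantale with bottom: a poset with all nonempty joins and a bottom element is
  exactly a complete lattice, so the carrier is a type of class complete_lattice.\<close>

definition quantale :: "('a::complete_lattice \<Rightarrow> 'a \<Rightarrow> 'a) \<Rightarrow> bool" where
  "quantale mult \<longleftrightarrow>
     (\<forall>a b. mult a b = mult b a) \<and>
     (\<forall>a b c. mult (mult a b) c = mult a (mult b c)) \<and>
     (\<forall>a. mult top a = a) \<and>
     (\<forall>a A. A \<noteq> {} \<longrightarrow> mult a (Sup A) = Sup (mult a ` A))"

definition reduced :: "('a::complete_lattice \<Rightarrow> 'a \<Rightarrow> 'a) \<Rightarrow> bool" where
  "reduced mult \<longleftrightarrow> (\<forall>a. mult a a = bot \<longrightarrow> a = bot)"

definition m_filter :: "('a::complete_lattice \<Rightarrow> 'a \<Rightarrow> 'a) \<Rightarrow> 'a set \<Rightarrow> bool" where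
  "m_filter mult F \<longleftrightarrow> top \<in> F \<and> (\<forall>a b. a \<in> F \<longrightarrow> a \<le> b \<longrightarrow> b \<in> F) \<and>
     (\<forall>a b. a \<in> F \<longrightarrow> b \<in> F \<longrightarrow> mult a b \<in> F)"

definition codense :: "('a::complete_lattice \<Rightarrow> 'a \<Rightarrow> 'a) \<Rightarrow> 'a \<Rightarrow> 'a set" where
  "codense mult a = {q. \<forall>x. mult q x \<le> a \<longrightarrow> x \<le> a}"

text \<open>a \<preceq>^1_F b: a nonempty family of pairs (a_i, s_i) with s_i in F,
  a \<le> \<Sum> a_i and s_i a_i \<le> b.  (A family is represented by the set of its pairs,
  which has the same join.)\<close>
definition prec1 :: "('a::complete_lattice \<Rightarrow> 'a \<Rightarrow> 'a) \<Rightarrow> 'a set \<Rightarrow> 'a \<Rightarrow> 'a \<Rightarrow> bool" where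
  "prec1 mult F a b \<longleftrightarrow>
     (\<exists>P :: ('a \<times> 'a) set. P \<noteq> {} \<and> a \<le> Sup (fst ` P) \<and>
        (\<forall>(x, s) \<in> P. s \<in> F \<and> mult s x \<le> b))"

definition precn :: "('a::complete_lattice \<Rightarrow> 'a \<Rightarrow> 'a) \<Rightarrow> 'a set \<Rightarrow> nat \<Rightarrow> 'a \<Rightarrow> 'a \<Rightarrow> bool" where
  "precn mult F n = (prec1 mult F ^^ n)"

definition prec :: "('a::complete_lattice \<Rightarrow> 'a \<Rightarrow> 'a) \<Rightarrow> 'a set \<Rightarrow> 'a \<Rightarrow> 'a \<Rightarrow> bool" where
  "prec mult F a b \<longleftrightarrow> (\<exists>n\<ge>1. precn mult F n a b)"

definition sim :: "('a::complete_lattice \<Rightarrow> 'a \<Rightarrow> 'a) \<Rightarrow> 'a set \<Rightarrow> 'a \<Rightarrow> 'a \<Rightarrow> bool" where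
  "sim mult F a b \<longleftrightarrow> prec mult F a b \<and> prec mult F b a"

definition cls :: "('a::complete_lattice \<Rightarrow> 'a \<Rightarrow> 'a) \<Rightarrow> 'a set \<Rightarrow> 'a \<Rightarrow> 'a set" where
  "cls mult F a = {b. sim mult F a b}"

definition conormal :: "('a::complete_lattice \<Rightarrow> 'a \<Rightarrow> 'a) \<Rightarrow> 'a set \<Rightarrow> bool" where
  "conormal mult C \<longleftrightarrow> (\<forall>m n. prec1 mult C m n \<longrightarrow> (\<exists>s\<in>C. mult s m \<le> n))"

definition hbar :: "('a::complete_lattice \<Rightarrow> 'a \<Rightarrow> 'a) \<Rightarrow> 'a \<Rightarrow> 'a" where
  "hbar mult q = Sup {q'. mult q q' = bot}"

end

theory Submission
  imports Defs
begin

text \<open>For the codense filter of 0 everything is governed by the annihilator \<open>\<hbar>(q)\<close>, the largest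
  element killed by \<open>q\<close>. A step \<open>a \<preceq>\<^sup>1 b\<close> can only enlarge annihilators (\<open>\<hbar>(b) \<le> \<hbar>(a)\<close>), because
  elements of the filter cancel against 0. Conversely, in a reduced quantale \<open>b + \<hbar>(b)\<close> lies in
  the filter, and if \<open>\<hbar>(b) \<le> \<hbar>(a)\<close> it already satisfies \<open>(b + \<hbar>(b)) a \<le> b\<close>. So \<open>a \<preceq>\<^sup>1 b\<close>, and
  hence \<open>a \<preceq> b\<close>, is equivalent to \<open>\<hbar>(b) \<le> \<hbar>(a)\<close> and is always witnessed by a single filter
  element, which gives both conormality and the description of the classes.\<close>

lemma prec1_singleI: "s \<in> F \<Longrightarrow> mult s a \<le> b \<Longrightarrow> prec1 mult F a b"
  unfolding prec1_def by (intro exI[of _ "{(a, s)}"]) auto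

lemma codense_bot_iff: "s \<in> codense mult bot \<longleftrightarrow> (\<forall>x. mult s x = bot \<longrightarrow> x = bot)"
  unfolding codense_def by (simp add: bot_unique)

locale unital_quantale =
  fixes mult :: "'a::complete_lattice \<Rightarrow> 'a \<Rightarrow> 'a" (infixl "\<cdot>" 70)
  assumes quantale: "quantale mult"
begin

lemma mult_commute: "a \<cdot> b = b \<cdot> a"
  using quantale by (simp add: quantale_def)

lemma mult_assoc: "a \<cdot> b \<cdot> c = a \<cdot> (b \<cdot> c)"
  using quantale unfolding quantale_def by blast

lemma mult_left_commute: "a \<cdot> (b \<cdot> c) = b \<cdot> (a \<cdot> c)"
  by (metis mult_assoc mult_commute)

lemma top_mult [simp]: "top \<cdot> a = a"
  using quantale by (simp add: quantale_def)

lemma mult_Sup: "A \<noteq> {} \<Longrightarrow> a \<cdot> Sup A = Sup ((\<cdot>) a ` A)"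
  using quantale by (simp add: quantale_def)

lemma mult_sup: "c \<cdot> sup a b = sup (c \<cdot> a) (c \<cdot> b)"
  using mult_Sup[of "{a, b}" c] by simp

lemma mult_right_mono: "a \<le> b \<Longrightarrow> c \<cdot> a \<le> c \<cdot> b"
  by (metis mult_sup sup.absorb_iff2)

lemma mult_le_right: "a \<cdot> b \<le> b"
  using mult_right_mono[of a top b] by (simp add: mult_commute)

lemma mult_bot [simp]: "a \<cdot> bot = bot"
  using mult_le_right[of a bot] by (simp add: bot_unique)

lemma mult_hbar [simp]: "q \<cdot> hbar mult q = bot"
proof -
  have "{x. q \<cdot> x = bot} \<noteq> {}" using mult_bot by blast
  then show ?thesis unfolding hbar_def by (auto simp: mult_Sup)
qed

lemma le_hbar_iff: "z \<le> hbar mult q \<longleftrightarrow> q \<cdot> z = bot"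
proof
  assume "z \<le> hbar mult q"
  then have "q \<cdot> z \<le> q \<cdot> hbar mult q" by (rule mult_right_mono)
  then show "q \<cdot> z = bot" by (simp add: bot_unique)
qed (simp add: hbar_def Sup_upper)

lemma hbar_mono_prec1:
  assumes "prec1 mult (codense mult bot) a b"
  shows "hbar mult b \<le> hbar mult a"
proof -
  obtain P where "P \<noteq> {}" and a_le: "a \<le> Sup (fst ` P)"
    and P: "\<And>x s. (x, s) \<in> P \<Longrightarrow> s \<in> codense mult bot \<and> s \<cdot> x \<le> b"
    using assms unfolding prec1_def by blast
  have "a \<cdot> z = bot" if "b \<cdot> z = bot" for z
  proof -
    have "z \<cdot> x = bot" if "(x, s) \<in> P" for x s
    proof -
      \<comment> \<open>\<open>s (z x) = z (s x) \<le> z b = 0\<close>, and \<open>s\<close> cancels against 0.\<close>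
      have "s \<cdot> (z \<cdot> x) \<le> z \<cdot> b"
        using mult_right_mono[of "s \<cdot> x" b z] P[OF that] by (simp add: mult_left_commute)
      then show ?thesis
        using P[OF that] \<open>b \<cdot> z = bot\<close> by (simp add: codense_bot_iff mult_commute bot_unique)
    qed
    then have "z \<cdot> Sup (fst ` P) = bot"
      using \<open>P \<noteq> {}\<close> by (auto simp: mult_Sup)
    then show ?thesis
      using mult_right_mono[OF a_le, of z] by (simp add: mult_commute bot_unique)
  qed
  then show ?thesis by (meson le_hbar_iff order_refl)
qed

lemma hbar_mono_precn:
  "precn mult (codense mult bot) n a b \<Longrightarrow> hbar mult b \<le> hbar mult a"
proof (induction n arbitrary: b)
  case (Suc n)
  then obtain c where "precn mult (codense mult bot) n a c" "prec1 mult (codense mult bot) c b"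
    by (auto simp: precn_def)
  with Suc.IH hbar_mono_prec1 show ?case by (meson order_trans)
qed (simp add: precn_def)

lemma sup_hbar_mult_le:
  assumes "hbar mult b \<le> hbar mult a"
  shows "sup b (hbar mult b) \<cdot> a \<le> b"
proof -
  have "sup b (hbar mult b) \<cdot> a = sup (a \<cdot> b) (a \<cdot> hbar mult b)"
    by (simp add: mult_commute mult_sup)
  also have "\<dots> \<le> sup b (a \<cdot> hbar mult a)"
    using mult_le_right mult_right_mono[OF assms] by (rule sup_mono)
  finally show ?thesis by simp
qed

end

locale reduced_quantale = unital_quantale +
  assumes reduced: "reduced mult"
begin

lemma sup_hbar_codense: "sup b (hbar mult b) \<in> codense mult bot"
  unfolding codense_bot_iff
proof (intro allI impI)
  fix x assume "sup b (hbar mult b) \<cdot> x = bot"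
  then have "sup (x \<cdot> b) (x \<cdot> hbar mult b) = bot"
    by (metis mult_commute mult_sup)
  then have "b \<cdot> x = bot" and hx: "x \<cdot> hbar mult b = bot"
    by (auto simp: mult_commute[of b x])
  \<comment> \<open>\<open>x\<close> annihilates \<open>b\<close>, so \<open>x \<le> \<hbar>(b)\<close> and \<open>x\<^sup>2 \<le> x \<hbar>(b) = 0\<close>.\<close>
  then have "x \<le> hbar mult b" by (simp add: le_hbar_iff)
  then have "x \<cdot> x \<le> x \<cdot> hbar mult b" by (rule mult_right_mono)
  then have "x \<cdot> x = bot" using hx by (simp add: bot_unique)
  then show "x = bot" using reduced unfolding reduced_def by blast
qed

lemma prec1_iff_hbar_le:
  "prec1 mult (codense mult bot) a b \<longleftrightarrow> hbar mult b \<le> hbar mult a"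
proof
  assume "hbar mult b \<le> hbar mult a"
  then show "prec1 mult (codense mult bot) a b"
    by (intro prec1_singleI[OF sup_hbar_codense[of b]] sup_hbar_mult_le)
qed (rule hbar_mono_prec1)

lemma conormal_codense_bot: "conormal mult (codense mult bot)"
  unfolding conormal_def using hbar_mono_prec1 sup_hbar_codense sup_hbar_mult_le by blast

lemma prec_iff_hbar_le: "prec mult (codense mult bot) a b \<longleftrightarrow> hbar mult b \<le> hbar mult a"
proof
  assume "hbar mult b \<le> hbar mult a"
  then have "precn mult (codense mult bot) 1 a b"
    by (simp only: precn_def relpowp_1 prec1_iff_hbar_le)
  then show "prec mult (codense mult bot) a b"
    unfolding prec_def by blast
qed (auto simp: prec_def hbar_mono_precn)

lemma cls_codense_bot: "cls mult (codense mult bot) x = {y. hbar mult y = hbar mult x}"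
  unfolding cls_def sim_def prec_iff_hbar_le by (auto simp: order_antisym)

end

theorem mainTheorem15:
  fixes mult :: "'a::complete_lattice \<Rightarrow> 'a \<Rightarrow> 'a"
  assumes "quantale mult" and "reduced mult"
  shows "conormal mult (codense mult bot) \<and>
         (\<forall>x y. cls mult (codense mult bot) x = cls mult (codense mult bot) y
                \<longleftrightarrow> hbar mult x = hbar mult y)"
proof -
  interpret reduced_quantale mult
    using assms by unfold_locales
  show ?thesis
    using conormal_codense_bot by (auto simp: cls_codense_bot)
qed

end
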